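(* Let $A$ be a binary matrix and let $U$ and $V$ be two distinct bases of $A$. Then at most one of $U$, $V$ spans the other; this holds both in the binary setting and in the boolean setting.
   Context: A set $X$ of $\{0,1\}$-vectors spans a vector $y$ in the binary (resp. boolean) sense if $y=\sum_{x\in X}c_xx$ with $c_x\in\{0,1\}$ using ordinary (resp. boolean, $1+1=1$) addition; $X$ spans a set $Y$ if it spans each vector of $Y$. A binary (resp. boolean) base of an $n\times m$ binary matrix $A$ is a set of $\{0,1\}$ column vectors of length $n$ spanning every column of $A$ in the corresponding sense, of minimum cardinality among such spanning sets. *)

theory Defs
  imports Main
begin

definition zo_vec :: "nat \<Rightarrow> (nat \<Rightarrow> nat) \<Rightarrow> bool" where
  "zo_vec n v \<longleftrightarrow> (\<forall>i<n. v i \<in> {0,1}) \<and> (\<forall>i. n \<le> i \<longrightarrow> v i = 0)"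

definition binary_matrix :: "nat \<Rightarrow> nat \<Rightarrow> (nat \<Rightarrow> nat \<Rightarrow> nat) \<Rightarrow> bool" where
  "binary_matrix n m A \<longleftrightarrow> (\<forall>i<n. \<forall>j<m. A i j \<in> {0,1})"

definition col :: "nat \<Rightarrow> (nat \<Rightarrow> nat \<Rightarrow> nat) \<Rightarrow> nat \<Rightarrow> (nat \<Rightarrow> nat)" where
  "col n A j = (\<lambda>i. if i < n then A i j else 0)"

definition cols :: "nat \<Rightarrow> nat \<Rightarrow> (nat \<Rightarrow> nat \<Rightarrow> nat) \<Rightarrow> (nat \<Rightarrow> nat) set" where
  "cols n m A = {col n A j | j. j < m}"

text \<open>Binary span: y is the ordinary (integer) sum of a subfamily of X.\<close>
definition bin_spans :: "(nat \<Rightarrow> nat) set \<Rightarrow> (nat \<Rightarrow> nat) \<Rightarrow> bool" where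
  "bin_spans X y \<longleftrightarrow> (\<exists>S\<subseteq>X. y = (\<lambda>i. \<Sum>x\<in>S. x i))"

definition bool_spans :: "(nat \<Rightarrow> nat) set \<Rightarrow> (nat \<Rightarrow> nat) \<Rightarrow> bool" where
  "bool_spans X y \<longleftrightarrow> (\<exists>S\<subseteq>X. y = (\<lambda>i. if \<exists>x\<in>S. x i = 1 then 1 else 0))"

definition spans_set ::
  "((nat \<Rightarrow> nat) set \<Rightarrow> (nat \<Rightarrow> nat) \<Rightarrow> bool) \<Rightarrow> (nat \<Rightarrow> nat) set \<Rightarrow> (nat \<Rightarrow> nat) set \<Rightarrow> bool" where
  "spans_set sp X Y \<longleftrightarrow> (\<forall>y\<in>Y. sp X y)"

definition is_base ::
  "((nat \<Rightarrow> nat) set \<Rightarrow> (nat \<Rightarrow> nat) \<Rightarrow> bool) \<Rightarrow> nat \<Rightarrow> nat \<Rightarrow> (nat \<Rightarrow> nat \<Rightarrow> nat)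
     \<Rightarrow> (nat \<Rightarrow> nat) set \<Rightarrow> bool" where
  "is_base sp n m A U \<longleftrightarrow>
     (\<forall>u\<in>U. zo_vec n u) \<and> spans_set sp U (cols n m A) \<and>
     (\<forall>W. (\<forall>w\<in>W. zo_vec n w) \<and> spans_set sp W (cols n m A) \<longrightarrow> card U \<le> card W)"

end

theory Submission
  imports Defs
begin

text \<open>Bases have equal size, so distinct bases U, V contain some u \<in> U - V. If V spans U and
U spans V, then u is a sum of vectors v \<in> V, each of which is a sum of vectors of U; none of
these is u itself, since v \<le> u pointwise and v \<noteq> u. So u is spanned by U - {u}, and
substituting this representation for u shows that U - {u} still spans every column of A,
contradicting minimality. In the binary case the substitution relies on all the vectors
involved being 0/1: overlapping summands would produce an entry \<ge> 2.\<close>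

subsection \<open>Bases\<close>

lemma finite_zo_vecs: "finite {v. zo_vec n v}"
proof -
  have "{v. zo_vec n v} \<subseteq>
      {f. \<forall>x. (x \<in> {..<n} \<longrightarrow> f x \<in> {0,1::nat}) \<and> (x \<notin> {..<n} \<longrightarrow> f x = 0)}"
    by (auto simp: zo_vec_def)
  moreover have "finite
      {f. \<forall>x. (x \<in> {..<n} \<longrightarrow> f x \<in> {0,1::nat}) \<and> (x \<notin> {..<n} \<longrightarrow> f x = 0)}"
    by (rule finite_set_of_finite_funs) auto
  ultimately show ?thesis
    by (rule finite_subset)
qed

lemma is_base_zo_vec: "is_base sp n m A U \<Longrightarrow> u \<in> U \<Longrightarrow> zo_vec n u"
  by (simp add: is_base_def)

lemma is_base_spans_set: "is_base sp n m A U \<Longrightarrow> spans_set sp U (cols n m A)"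
  by (simp add: is_base_def)

lemma is_base_card_le:
  "is_base sp n m A U \<Longrightarrow> \<forall>w\<in>W. zo_vec n w \<Longrightarrow> spans_set sp W (cols n m A)
    \<Longrightarrow> card U \<le> card W"
  by (simp add: is_base_def)

lemma is_base_finite: "is_base sp n m A U \<Longrightarrow> finite U"
  unfolding is_base_def using finite_zo_vecs by (metis mem_Collect_eq rev_finite_subset subsetI)

lemma zo_vec_le_1: "zo_vec n v \<Longrightarrow> v i \<le> 1"
  unfolding zo_vec_def by (cases "i < n") auto

lemma col_le_1: "binary_matrix n m A \<Longrightarrow> c \<in> cols n m A \<Longrightarrow> c i \<le> 1"
  unfolding binary_matrix_def cols_def col_def by fastforce

lemma is_base_card_eq:
  assumes "is_base sp n m A U" "is_base sp n m A V"
  shows "card U = card V"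
proof -
  have "card U \<le> card V"
    using is_base_card_le[OF assms(1) _ is_base_spans_set[OF assms(2)]] is_base_zo_vec[OF assms(2)]
    by blast
  moreover have "card V \<le> card U"
    using is_base_card_le[OF assms(2) _ is_base_spans_set[OF assms(1)]] is_base_zo_vec[OF assms(1)]
    by blast
  ultimately show ?thesis
    by (rule antisym)
qed

lemma is_bases_diff_nonempty:
  assumes "is_base sp n m A U" "is_base sp n m A V" "U \<noteq> V"
  obtains u where "u \<in> U" "u \<notin> V"
proof -
  have "\<not> U \<subseteq> V"
  proof
    assume "U \<subseteq> V"
    moreover have "finite V" "card U = card V"
      using assms(1,2) is_base_finite is_base_card_eq by blast+
    ultimately show False
      using card_subset_eq[of V U] assms(3) by simp
  qed
  then show ?thesis
    using that by blast
qed

lemma is_base_minimal: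
  assumes "is_base sp n m A U" "u \<in> U"
  shows "\<not> spans_set sp (U - {u}) (cols n m A)"
proof
  assume spans: "spans_set sp (U - {u}) (cols n m A)"
  have "\<forall>w\<in>U - {u}. zo_vec n w"
    using is_base_zo_vec[OF assms(1)] by blast
  then have "card U \<le> card (U - {u})"
    using is_base_card_le[OF assms(1) _ spans] by blast
  moreover have "card (U - {u}) < card U"
    using card_Diff1_less[OF is_base_finite[OF assms(1)] assms(2)] .
  ultimately show False
    by simp
qed

subsection \<open>Binary span\<close>

lemma add_le_sum_nat:
  fixes f :: "'a \<Rightarrow> nat"
  assumes "finite S" "a \<in> S" "b \<in> S" "a \<noteq> b"
  shows "f a + f b \<le> sum f S"
proof -
  have "f b \<le> sum f (S - {a})"
    by (rule member_le_sum) (use assms in auto)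
  then show ?thesis
    using sum.remove[OF assms(1,2), of f] by simp
qed

lemma bin_spans_without_upper_bound:
  assumes "bin_spans X v" "v \<le> u" "v \<noteq> u" "finite X"
  shows "bin_spans (X - {u}) v"
proof -
  obtain T where T: "T \<subseteq> X" "v = (\<lambda>i. \<Sum>x\<in>T. x i)"
    using assms(1) unfolding bin_spans_def by blast
  have "u \<notin> T"
  proof
    assume "u \<in> T"
    then have "u \<le> v"
      using T finite_subset[OF T(1) assms(4)] by (auto simp: le_fun_def intro: member_le_sum)
    then show False
      using assms(2,3) by simp
  qed
  then show ?thesis
    using T unfolding bin_spans_def by blast
qed

lemma bin_spans_sum:
  assumes "finite X" "finite S" "\<forall>v\<in>S. bin_spans X v" "\<And>i. (\<Sum>v\<in>S. v i) \<le> 1"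
  shows "bin_spans X (\<lambda>i. \<Sum>v\<in>S. v i)"
proof -
  have "\<forall>v\<in>S. \<exists>T. T \<subseteq> X \<and> v = (\<lambda>i. \<Sum>x\<in>T. x i)"
    using assms(3) unfolding bin_spans_def by blast
  then have "\<exists>T. \<forall>v\<in>S. T v \<subseteq> X \<and> v = (\<lambda>i. \<Sum>x\<in>T v. x i)"
    by (rule bchoice)
  then obtain T where T: "\<forall>v\<in>S. T v \<subseteq> X \<and> v = (\<lambda>i. \<Sum>x\<in>T v. x i)" ..
  \<comment> \<open>Zero summands may be shared between different T v; only nonzero ones are disjoint.\<close>
  define T' where "T' v = T v - {\<lambda>_. 0}" for v
  have T'_sub: "T' v \<subseteq> X" if "v \<in> S" for v
    using T that unfolding T'_def by blast
  have T'_sum: "v i = (\<Sum>x\<in>T' v. x i)" if "v \<in> S" for v i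
  proof -
    have "v = (\<lambda>i. \<Sum>x\<in>T v. x i)"
      using T that by blast
    then have "v i = (\<Sum>x\<in>T v. x i)"
      by (rule fun_cong)
    also have "\<dots> = (\<Sum>x\<in>T' v. x i)"
      unfolding T'_def using sum_diff1_nat[of "\<lambda>x. x i" "T v" "\<lambda>_. 0"] by simp
    finally show ?thesis .
  qed
  have T'_finite: "finite (T' v)" if "v \<in> S" for v
    using finite_subset[OF T'_sub[OF that] assms(1)] .
  have T'_le: "w i \<le> v i" if "v \<in> S" "w \<in> T' v" for v w i
    using member_le_sum[OF that(2) _ T'_finite[OF that(1)], of "\<lambda>x. x i"] T'_sum[OF that(1)]
    by simp
  have T'_disjoint: "T' v1 \<inter> T' v2 = {}" if "v1 \<in> S" "v2 \<in> S" "v1 \<noteq> v2" for v1 v2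
  proof (rule ccontr)
    assume "T' v1 \<inter> T' v2 \<noteq> {}"
    then obtain w where w: "w \<in> T' v1" "w \<in> T' v2"
      by blast
    then obtain i where "w i \<noteq> 0"
      unfolding T'_def by auto
    moreover have "w i \<le> v1 i" "w i \<le> v2 i"
      using w that T'_le by blast+
    moreover have "v1 i + v2 i \<le> (\<Sum>v\<in>S. v i)"
      using add_le_sum_nat[OF assms(2) that, of "\<lambda>v. v i"] .
    ultimately show False
      using assms(4)[of i] by linarith
  qed
  have "(\<lambda>i. \<Sum>v\<in>S. v i) = (\<lambda>i. \<Sum>x\<in>(\<Union>v\<in>S. T' v). x i)"
  proof
    fix i
    have "(\<Sum>x\<in>(\<Union>v\<in>S. T' v). x i) = (\<Sum>v\<in>S. \<Sum>x\<in>T' v. x i)"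
      by (rule sum.UNION_disjoint) (use assms(2) T'_finite T'_disjoint in auto)
    also have "\<dots> = (\<Sum>v\<in>S. v i)"
      by (rule sum.cong[OF refl]) (rule T'_sum[symmetric])
    finally show "(\<Sum>v\<in>S. v i) = (\<Sum>x\<in>(\<Union>v\<in>S. T' v). x i)" ..
  qed
  moreover have "(\<Union>v\<in>S. T' v) \<subseteq> X"
    using T'_sub by blast
  ultimately show ?thesis
    unfolding bin_spans_def by blast
qed

lemma bin_spans_remove_redundant:
  assumes "finite X" "bin_spans X c" "\<And>i. c i \<le> 1" "bin_spans (X - {u}) u"
  shows "bin_spans (X - {u}) c"
proof -
  obtain S where S: "S \<subseteq> X" "c = (\<lambda>i. \<Sum>x\<in>S. x i)"
    using assms(2) unfolding bin_spans_def by blast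
  obtain R where R: "R \<subseteq> X - {u}" "u = (\<lambda>i. \<Sum>x\<in>R. x i)"
    using assms(4) unfolding bin_spans_def by blast
  have fin: "finite S" "finite R"
    using S(1) R(1) assms(1) by (meson finite_subset finite_Diff)+
  show ?thesis
  proof (cases "u \<in> S")
    case False
    then show ?thesis
      using S unfolding bin_spans_def by blast
  next
    case True
    have "c i = (\<Sum>x\<in>(S - {u}) \<union> R. x i)" for i
    proof -
      \<comment> \<open>A common summand r has r i + u i \<le> c i \<le> 1 and r i \<le> u i, so r i = 0.\<close>
      have "r i = 0" if "r \<in> (S - {u}) \<inter> R" for r
      proof -
        have "r i + u i \<le> c i"
          using add_le_sum_nat[OF fin(1) _ True, of r "\<lambda>x. x i"] that S(2) by auto
        moreover have "r i \<le> u i"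
          using that R(2) fin(2) by (auto intro: member_le_sum)
        ultimately show ?thesis
          using assms(3)[of i] by linarith
      qed
      then have overlap: "(\<Sum>x\<in>(S - {u}) \<inter> R. x i) = 0"
        by (intro sum.neutral) blast
      have u_sum: "u i = (\<Sum>x\<in>R. x i)"
        using R(2) by simp
      have "(\<Sum>x\<in>(S - {u}) \<union> R. x i)
          = (\<Sum>x\<in>S - {u}. x i) + (\<Sum>x\<in>R. x i) - (\<Sum>x\<in>(S - {u}) \<inter> R. x i)"
        using fin by (intro sum_Un_nat) auto
      also have "\<dots> = (\<Sum>x\<in>S - {u}. x i) + u i"
        unfolding overlap u_sum by simp
      also have "\<dots> = c i"
        using sum.remove[OF fin(1) True, of "\<lambda>x. x i"] S(2) by simp
      finally show ?thesis ..
    qed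
    moreover have "(S - {u}) \<union> R \<subseteq> X - {u}"
      using S(1) R(1) by blast
    ultimately show ?thesis
      unfolding bin_spans_def by blast
  qed
qed

lemma bin_bases_not_mutually_spanning:
  assumes "binary_matrix n m A" "U \<noteq> V"
    and U: "is_base bin_spans n m A U" and V: "is_base bin_spans n m A V"
    and "spans_set bin_spans U V" "spans_set bin_spans V U"
  shows False
proof -
  obtain u where u: "u \<in> U" "u \<notin> V"
    using is_bases_diff_nonempty[OF U V assms(2)] .
  have fin: "finite U" "finite V"
    using U V is_base_finite by blast+
  obtain S where S: "S \<subseteq> V" "u = (\<lambda>i. \<Sum>v\<in>S. v i)"
    using assms(6) u(1) unfolding spans_set_def bin_spans_def by blast
  have "finite S"
    using S(1) fin(2) finite_subset by blast
  have "bin_spans (U - {u}) v" if "v \<in> S" for v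
  proof (rule bin_spans_without_upper_bound)
    show "bin_spans U v"
      using assms(5) S(1) that unfolding spans_set_def by blast
    show "v \<le> u"
      unfolding le_fun_def S(2) by (auto intro!: member_le_sum[OF that _ \<open>finite S\<close>])
    show "v \<noteq> u"
      using S(1) that u(2) by blast
  qed (use fin in simp)
  moreover have "(\<Sum>v\<in>S. v i) \<le> 1" for i
    using zo_vec_le_1[OF is_base_zo_vec[OF U u(1)], of i] S(2) by simp
  ultimately have "bin_spans (U - {u}) (\<lambda>i. \<Sum>v\<in>S. v i)"
    using bin_spans_sum[of "U - {u}" S] fin(1) \<open>finite S\<close> by blast
  then have u_spanned: "bin_spans (U - {u}) u"
    by (simp only: S(2)[symmetric])
  have "spans_set bin_spans (U - {u}) (cols n m A)"
    unfolding spans_set_def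
  proof
    fix c
    assume c: "c \<in> cols n m A"
    then have "bin_spans U c"
      using is_base_spans_set[OF U] unfolding spans_set_def by blast
    then show "bin_spans (U - {u}) c"
      by (rule bin_spans_remove_redundant[OF fin(1) _ _ u_spanned]) (rule col_le_1[OF assms(1) c])
  qed
  then show False
    using is_base_minimal[OF U u(1)] by blast
qed

subsection \<open>Boolean span\<close>

lemma bool_spans_without_upper_bound:
  assumes "bool_spans X v" "\<And>i. v i = 1 \<Longrightarrow> u i = 1" "\<And>i. u i \<le> 1" "v \<noteq> u"
  shows "bool_spans (X - {u}) v"
proof -
  obtain T where T: "T \<subseteq> X" "v = (\<lambda>i. if \<exists>x\<in>T. x i = 1 then 1 else 0)"
    using assms(1) unfolding bool_spans_def by blast
  have "u \<notin> T"
  proof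
    assume "u \<in> T"
    have "v i = u i" for i
    proof (cases "u i = 1")
      case True
      then show ?thesis
        using \<open>u \<in> T\<close> unfolding T(2) by auto
    next
      case False
      moreover have "v i \<in> {0, 1}"
        unfolding T(2) by simp
      ultimately show ?thesis
        using assms(2,3)[of i] by fastforce
    qed
    then have "v = u"
      by (rule ext)
    then show False
      using assms(4) by contradiction
  qed
  then show ?thesis
    using T unfolding bool_spans_def by blast
qed

lemma bool_spans_or:
  assumes "\<forall>v\<in>S. bool_spans X v"
  shows "bool_spans X (\<lambda>i. if \<exists>v\<in>S. v i = 1 then 1 else 0)"
proof -
  have "\<forall>v\<in>S. \<exists>T. T \<subseteq> X \<and> v = (\<lambda>i. if \<exists>x\<in>T. x i = 1 then 1 else 0)"
    using assms unfolding bool_spans_def by blast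
  then have "\<exists>T. \<forall>v\<in>S. T v \<subseteq> X \<and> v = (\<lambda>i. if \<exists>x\<in>T v. x i = 1 then 1 else 0)"
    by (rule bchoice)
  then obtain T where T: "\<forall>v\<in>S. T v \<subseteq> X \<and> v = (\<lambda>i. if \<exists>x\<in>T v. x i = 1 then 1 else 0)"
    by blast
  have iff: "(\<exists>v\<in>S. v i = 1) \<longleftrightarrow> (\<exists>x\<in>(\<Union>v\<in>S. T v). x i = 1)" for i
  proof -
    have "v i = 1 \<longleftrightarrow> (\<exists>x\<in>T v. x i = 1)" if "v \<in> S" for v
    proof -
      have "v = (\<lambda>i. if \<exists>x\<in>T v. x i = 1 then 1 else 0)"
        using T that by blast
      then have "v i = (if \<exists>x\<in>T v. x i = 1 then 1 else 0)"
        by (rule fun_cong)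
      then show ?thesis
        by simp
    qed
    then show ?thesis
      by blast
  qed
  have "(\<lambda>i. if \<exists>v\<in>S. v i = 1 then 1 else 0)
      = (\<lambda>i. if \<exists>x\<in>(\<Union>v\<in>S. T v). x i = 1 then 1 else 0)"
    using iff by simp
  moreover have "(\<Union>v\<in>S. T v) \<subseteq> X"
    using T by blast
  ultimately show ?thesis
    unfolding bool_spans_def by (intro exI[of _ "\<Union>v\<in>S. T v"]) simp
qed

lemma bool_spans_remove_redundant:
  assumes "bool_spans X c" "bool_spans (X - {u}) u"
  shows "bool_spans (X - {u}) c"
proof -
  obtain S where S: "S \<subseteq> X" "c = (\<lambda>i. if \<exists>x\<in>S. x i = 1 then 1 else 0)"
    using assms(1) unfolding bool_spans_def by blast
  obtain R where R: "R \<subseteq> X - {u}" "u = (\<lambda>i. if \<exists>x\<in>R. x i = 1 then 1 else 0)"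
    using assms(2) unfolding bool_spans_def by blast
  show ?thesis
  proof (cases "u \<in> S")
    case False
    then show ?thesis
      using S unfolding bool_spans_def by blast
  next
    case True
    have u_iff: "u i = 1 \<longleftrightarrow> (\<exists>x\<in>R. x i = 1)" for i
      using R(2) by simp
    have "(\<exists>x\<in>S. x i = 1) \<longleftrightarrow> (\<exists>x\<in>(S - {u}) \<union> R. x i = 1)" for i
      using True u_iff[of i] by blast
    moreover have "(S - {u}) \<union> R \<subseteq> X - {u}"
      using S(1) R(1) by blast
    ultimately show ?thesis
      unfolding bool_spans_def using S(2) by (intro exI[of _ "(S - {u}) \<union> R"]) auto
  qed
qed

lemma bool_bases_not_mutually_spanning:
  assumes "U \<noteq> V"
    and U: "is_base bool_spans n m A U" and V: "is_base bool_spans n m A V"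
    and "spans_set bool_spans U V" "spans_set bool_spans V U"
  shows False
proof -
  obtain u where u: "u \<in> U" "u \<notin> V"
    using is_bases_diff_nonempty[OF U V assms(1)] .
  obtain S where S: "S \<subseteq> V" "u = (\<lambda>i. if \<exists>v\<in>S. v i = 1 then 1 else 0)"
    using assms(5) u(1) unfolding spans_set_def bool_spans_def by blast
  have "bool_spans (U - {u}) v" if "v \<in> S" for v
  proof (rule bool_spans_without_upper_bound)
    show "bool_spans U v"
      using assms(4) S(1) that unfolding spans_set_def by blast
    show "u i = 1" if "v i = 1" for i
      using S \<open>v \<in> S\<close> that by auto
    show "u i \<le> 1" for i
      using zo_vec_le_1[OF is_base_zo_vec[OF U u(1)]] .
    show "v \<noteq> u"
      using S(1) that u(2) by blast
  qed
  then have "bool_spans (U - {u}) (\<lambda>i. if \<exists>v\<in>S. v i = 1 then 1 else 0)"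
    by (intro bool_spans_or) blast
  then have "bool_spans (U - {u}) u"
    by (simp only: S(2)[symmetric])
  then have "spans_set bool_spans (U - {u}) (cols n m A)"
    using is_base_spans_set[OF U] bool_spans_remove_redundant unfolding spans_set_def by blast
  then show False
    using is_base_minimal[OF U u(1)] by blast
qed

theorem mainTheorem18:
  fixes n m :: nat and A :: "nat \<Rightarrow> nat \<Rightarrow> nat" and U V :: "(nat \<Rightarrow> nat) set"
  assumes "binary_matrix n m A" and "U \<noteq> V"
  shows "(is_base bin_spans n m A U \<and> is_base bin_spans n m A V \<longrightarrow>
            \<not> (spans_set bin_spans U V \<and> spans_set bin_spans V U))
       \<and> (is_base bool_spans n m A U \<and> is_base bool_spans n m A V \<longrightarrow>
            \<not> (spans_set bool_spans U V \<and> spans_set bool_spans V U))"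
  using bin_bases_not_mutually_spanning[OF assms] bool_bases_not_mutually_spanning[OF assms(2)]
  by blast

end
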